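(* Let $F\subsetneq K$ be fields of characteristic $0$, with $F$ a proper nonempty subfield of $K$. Let $p(x)=\sum_{k=0}^{n}a_k x^k\in K[x]$ be non-constant with $a_n\neq 0$, and let $q(x)=\sum_{j=0}^{m}b_j x^j\in K[x]\setminus F[x]$ with $b_m\neq 0$. Suppose $a_n,b_m,b_0\in F$. Then $p\circ q\notin F[x]$ and $D_F(p\circ q)=D_F(q)$.
   Context: For sets $F\subset K$ and $p(x)=\sum_{k=0}^{n}a_kx^k\in K[x]$ with $a_n\neq 0$, the $F$ deficit $D_F(p)$ is defined as follows: if $p\in K[x]\setminus F[x]$, then $D_F(p)=n-\max\{0\le k\le n: a_k\notin F\}$; if $p\in F[x]$, then $D_F(p)=n$. Here $F[x]$ denotes the set of polynomials with all coefficients in $F$. *)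

theory Defs
  imports "HOL-Computational_Algebra.Polynomial"
begin

definition is_subfield :: "'a::field set \<Rightarrow> bool" where
  "is_subfield F \<longleftrightarrow> 0 \<in> F \<and> 1 \<in> F \<and>
     (\<forall>x\<in>F. \<forall>y\<in>F. x + y \<in> F \<and> x * y \<in> F) \<and>
     (\<forall>x\<in>F. - x \<in> F) \<and> (\<forall>x\<in>F. x \<noteq> 0 \<longrightarrow> inverse x \<in> F)"

definition poly_over :: "'a::zero set \<Rightarrow> 'a poly set" where
  "poly_over F = {p. \<forall>i. coeff p i \<in> F}"

definition deficit :: "'a::zero set \<Rightarrow> 'a poly \<Rightarrow> nat" where
  "deficit F p = (if p \<in> poly_over F then degree p
     else degree p - Max {k. k \<le> degree p \<and> coeff p k \<notin> F})"

end

theory Submission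
  imports Defs
begin

text \<open>Split \<open>q = A + B\<close>, where \<open>B\<close> consists of the terms of \<open>q\<close> up to the highest
  coefficient \<open>b\<^sub>k \<notin> F\<close>, so that \<open>A \<in> F[x]\<close> has degree \<open>m\<close> and \<open>0 < k < m\<close> because \<open>b\<^sub>0, b\<^sub>m \<in> F\<close>.
  In \<open>p \<circ> q = a\<^sub>n (A + B)\<^sup>n + (lower powers of q)\<close> every coefficient above \<open>(n - 1) m + k\<close>
  comes from \<open>a\<^sub>n A\<^sup>n \<in> F[x]\<close>, while the coefficient at \<open>(n - 1) m + k\<close> is an element of \<open>F\<close>
  plus \<open>n a\<^sub>n b\<^sub>m\<^sup>n\<^sup>-\<^sup>1 b\<^sub>k\<close>, which lies outside \<open>F\<close> (characteristic \<open>0\<close> makes \<open>n \<noteq> 0\<close>).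
  Hence \<open>D\<^sub>F(p \<circ> q) = n m - ((n - 1) m + k) = m - k = D\<^sub>F(q)\<close>.\<close>

lemma subfieldD:
  assumes "is_subfield F"
  shows "0 \<in> F" "1 \<in> F" "x \<in> F \<Longrightarrow> y \<in> F \<Longrightarrow> x + y \<in> F"
    "x \<in> F \<Longrightarrow> y \<in> F \<Longrightarrow> x * y \<in> F" "x \<in> F \<Longrightarrow> - x \<in> F"
    "x \<in> F \<Longrightarrow> x \<noteq> 0 \<Longrightarrow> inverse x \<in> F"
  using assms unfolding is_subfield_def by auto

lemma subfield_of_nat:
  assumes "is_subfield F"
  shows "of_nat n \<in> F"
  by (induction n) (auto intro: subfieldD[OF assms])

lemma subfield_add_notin:
  assumes "is_subfield F" "a \<in> F" "b \<notin> F"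
  shows "a + b \<notin> F"
proof
  assume "a + b \<in> F"
  with subfieldD(3,5)[OF assms(1)] assms(2) have "- a + (a + b) \<in> F" by blast
  with assms(3) show False by simp
qed

lemma subfield_mult_notin:
  assumes "is_subfield F" "c \<in> F" "c \<noteq> 0" "b \<notin> F"
  shows "c * b \<notin> F"
proof
  assume "c * b \<in> F"
  with subfieldD(4,6)[OF assms(1)] assms(2,3) have "inverse c * (c * b) \<in> F" by blast
  with assms(3,4) show False by (simp add: field_simps)
qed

lemma poly_over_mult:
  assumes "is_subfield F" "P \<in> poly_over F" "Q \<in> poly_over F"
  shows "P * Q \<in> poly_over F"
  using assms unfolding poly_over_def
  by (auto intro!: coeff_mult_semiring_closed subfieldD[OF assms(1)])

lemma poly_over_power:
  assumes "is_subfield F" "P \<in> poly_over F"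
  shows "P ^ n \<in> poly_over F"
proof (induction n)
  case 0
  then show ?case using subfieldD[OF assms(1)] by (simp add: poly_over_def coeff_1)
next
  case (Suc n)
  then show ?case using poly_over_mult[OF assms] by simp
qed

lemma highest_coeff_notin:
  assumes "0 \<in> F" "q \<notin> poly_over F"
  obtains k where "k \<le> degree q" "coeff q k \<notin> F" "\<forall>i>k. coeff q i \<in> F"
proof -
  define S where "S = {i. coeff q i \<notin> F}"
  have S_bound: "i \<le> degree q" if "i \<in> S" for i
    using that assms(1) by (metis S_def coeff_eq_0 mem_Collect_eq not_le)
  then have "finite S" by (meson finite_atMost finite_subset atMost_iff subsetI)
  moreover have "S \<noteq> {}" using assms(2) by (auto simp: S_def poly_over_def)
  ultimately have "Max S \<in> S" "\<And>i. i \<in> S \<Longrightarrow> i \<le> Max S" by auto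
  then show thesis using S_bound by (intro that[of "Max S"]) (auto simp: S_def not_le[symmetric])
qed

lemma deficit_eqI:
  assumes "0 \<in> F" "coeff p k \<notin> F" "\<forall>i>k. coeff p i \<in> F"
  shows "p \<notin> poly_over F" "deficit F p = degree p - k"
proof -
  show notin: "p \<notin> poly_over F" using assms(2) by (auto simp: poly_over_def)
  have "k \<le> degree p" using assms(1,2) by (metis coeff_eq_0 not_le)
  then have "Max {i. i \<le> degree p \<and> coeff p i \<notin> F} = k"
    using assms(2,3) by (intro Max_eqI) (auto simp: not_le[symmetric])
  then show "deficit F p = degree p - k" using notin by (simp add: deficit_def)
qed

lemma split_at_highest_coeff_notin:
  assumes "is_subfield F" "coeff q k \<notin> F" "\<forall>i>k. coeff q i \<in> F" "k < degree q"
  obtains A B where "q = A + B" "A \<in> poly_over F" "degree A = degree q"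
    "degree B = k" "coeff B k \<notin> F"
proof
  define B where "B = poly_cutoff (Suc k) q"
  have cB: "coeff B i = (if i \<le> k then coeff q i else 0)" for i
    by (simp add: B_def coeff_poly_cutoff)
  have cA: "coeff (q - B) i = (if i \<le> k then 0 else coeff q i)" for i
    by (simp add: cB)
  show "q = (q - B) + B" by simp
  show "q - B \<in> poly_over F"
    using assms(3) subfieldD(1)[OF assms(1)] by (auto simp: poly_over_def cA simp del: coeff_diff)
  show "coeff B k \<notin> F" using assms(2) by (simp add: cB)
  have "coeff q k \<noteq> 0" using assms(2) subfieldD(1)[OF assms(1)] by auto
  then show "degree B = k"
    by (intro antisym degree_le le_degree) (auto simp: cB)
  show "degree (q - B) = degree q"
  proof (rule antisym)
    show "degree (q - B) \<le> degree q"
      by (rule degree_le) (simp add: cA coeff_eq_0 del: coeff_diff)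
    have "lead_coeff q \<noteq> 0" using assms(4) by auto
    then show "degree q \<le> degree (q - B)"
      using assms(4) by (intro le_degree) (simp add: cA del: coeff_diff)
  qed
qed

lemma pcompose_monom: "pcompose (monom c n) q = smult c (q ^ n)"
  by (induction n) (auto simp: monom_Suc pcompose_pCons monom_0)

lemma degree_of_nat_mult_le: "degree (of_nat c * P) \<le> degree (P :: 'a::comm_ring_1 poly)"
  by (simp add: of_nat_poly degree_smult_le)

lemma power_add_leading_terms:
  fixes A B :: "'a::comm_ring_1 poly"
  assumes "degree A \<le> m" "degree B \<le> k" "0 < k" "k < m"
  shows "\<exists>E. (A + B) ^ Suc j = A ^ Suc j + of_nat (Suc j) * (A ^ j * B) + E
    \<and> degree E < j * m + k"
proof (induction j)
  case 0
  then show ?case using assms by auto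
next
  case (Suc j)
  then obtain E where E: "(A + B) ^ Suc j = A ^ Suc j + of_nat (Suc j) * (A ^ j * B) + E"
    and dE: "degree E < j * m + k" by blast
  define E' where "E' = A * E + of_nat (Suc j) * (A ^ j * B * B) + B * E"
  have "(A + B) ^ Suc (Suc j) = (A + B) * (A ^ Suc j + of_nat (Suc j) * (A ^ j * B) + E)"
    using E by simp
  also have "\<dots> = A ^ Suc (Suc j) + of_nat (Suc (Suc j)) * (A ^ Suc j * B) + E'"
    by (simp add: E'_def algebra_simps)
  finally have eq: "(A + B) ^ Suc (Suc j)
      = A ^ Suc (Suc j) + of_nat (Suc (Suc j)) * (A ^ Suc j * B) + E'" .
  have "degree (A ^ j) \<le> j * m"
    using degree_power_le[of A j] assms(1) by (simp add: mult.commute order_trans)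
  then have "degree (A ^ j * B * B) \<le> j * m + k + k"
    using degree_mult_le[of "A ^ j * B" B] degree_mult_le[of "A ^ j" B] assms(2) by linarith
  then have "degree (of_nat (Suc j) * (A ^ j * B * B)) < Suc j * m + k"
    using degree_of_nat_mult_le[of "Suc j" "A ^ j * B * B"] assms(4) by simp
  moreover have "degree (A * E) < Suc j * m + k"
    using degree_mult_le[of A E] dE assms(1) by simp
  moreover have "degree (B * E) < Suc j * m + k"
    using degree_mult_le[of B E] dE assms(2,4) by simp
  ultimately have "degree E' < Suc j * m + k"
    unfolding E'_def by (intro degree_add_less)
  then show ?case using eq by blast
qed

lemma pcompose_add_leading_terms:
  fixes p A B :: "'a::comm_ring_1 poly"
  assumes "degree p = Suc j" "degree A \<le> m" "degree B \<le> k" "0 < k" "k < m"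
  shows "\<exists>G. pcompose p (A + B)
      = smult (lead_coeff p) (A ^ Suc j + of_nat (Suc j) * (A ^ j * B)) + G
    \<and> degree G < j * m + k"
proof -
  define a where "a = lead_coeff p"
  define p' where "p' = p - monom a (Suc j)"
  obtain E where E: "(A + B) ^ Suc j = A ^ Suc j + of_nat (Suc j) * (A ^ j * B) + E"
    and dE: "degree E < j * m + k"
    using power_add_leading_terms[OF assms(2-5)] by blast
  have "degree p' \<le> j"
    using assms(1) by (intro degree_le) (auto simp: p'_def a_def coeff_monom coeff_eq_0)
  moreover have "degree (A + B) \<le> m"
    using assms(2,3,5) degree_add_le[of A m B] by simp
  ultimately have "degree (pcompose p' (A + B)) \<le> j * m"
    using degree_pcompose_le[of p' "A + B"] by (meson mult_le_mono order_trans)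
  then have "degree (smult a E + pcompose p' (A + B)) < j * m + k"
    using dE assms(4) degree_smult_le[of a E] by (intro degree_add_less) auto
  moreover have "pcompose p (A + B) = smult a ((A + B) ^ Suc j) + pcompose p' (A + B)"
    by (simp add: p'_def pcompose_diff pcompose_monom)
  ultimately show ?thesis
    unfolding a_def[symmetric] E by (intro exI[of _ "smult a E + pcompose p' (A + B)"])
      (simp add: smult_add_right)
qed

lemma pcompose_highest_coeff_notin:
  fixes p A B :: "'a::field_char_0 poly"
  assumes F: "is_subfield F" and AF: "A \<in> poly_over F"
    and dA: "degree A = m" and dB: "degree B = k" and "0 < k" "k < m"
    and bk: "coeff B k \<notin> F" and dp: "degree p = Suc j" and aF: "lead_coeff p \<in> F"
  shows "coeff (pcompose p (A + B)) (j * m + k) \<notin> F"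
    and "\<forall>i > j * m + k. coeff (pcompose p (A + B)) i \<in> F"
proof -
  define a where "a = lead_coeff p"
  obtain G where G: "pcompose p (A + B)
      = smult a (A ^ Suc j + of_nat (Suc j) * (A ^ j * B)) + G"
    and dG: "degree G < j * m + k"
    using pcompose_add_leading_terms[OF dp, of A m B k] assms unfolding a_def by auto
  have coeff_eq: "coeff (pcompose p (A + B)) i
      = a * coeff (A ^ Suc j) i + (a * of_nat (Suc j)) * coeff (A ^ j * B) i + coeff G i" for i
    by (simp add: G of_nat_poly algebra_simps)
  have AjF: "coeff (A ^ i) l \<in> F" for i l
    using poly_over_power[OF F AF] by (simp add: poly_over_def)
  have "p \<noteq> 0" using dp by auto
  then have "a \<in> F" "a \<noteq> 0" using aF by (auto simp: a_def)
  then have top_part: "a * coeff (A ^ Suc j) i \<in> F" for i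
    using AjF subfieldD(4)[OF F] by blast
  have "A \<noteq> 0" using dA \<open>k < m\<close> by auto
  then have dAj: "degree (A ^ j) = j * m" by (simp add: degree_power_eq dA)
  show "\<forall>i > j * m + k. coeff (pcompose p (A + B)) i \<in> F"
  proof (intro allI impI)
    fix i assume "j * m + k < i"
    moreover have "degree (A ^ j * B) \<le> j * m + k"
      using degree_mult_le[of "A ^ j" B] dAj dB by simp
    ultimately show "coeff (pcompose p (A + B)) i \<in> F"
      using dG top_part by (simp add: coeff_eq coeff_eq_0)
  qed
  define c where "c = a * of_nat (Suc j) * lead_coeff (A ^ j)"
  have "c \<in> F"
    unfolding c_def using \<open>a \<in> F\<close> AjF subfield_of_nat[OF F] subfieldD(4)[OF F] by blast
  moreover have "c \<noteq> 0" using \<open>a \<noteq> 0\<close> \<open>A \<noteq> 0\<close> by (simp add: c_def del: of_nat_Suc)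
  moreover have "coeff (A ^ j * B) (j * m + k) = lead_coeff (A ^ j) * coeff B k"
    using coeff_mult_degree_sum[of "A ^ j" B] by (simp add: dAj dB)
  then have "coeff (pcompose p (A + B)) (j * m + k)
      = a * coeff (A ^ Suc j) (j * m + k) + c * coeff B k"
    using dG by (simp add: coeff_eq coeff_eq_0 c_def ac_simps del: power_Suc of_nat_Suc)
  ultimately show "coeff (pcompose p (A + B)) (j * m + k) \<notin> F"
    using subfield_add_notin[OF F top_part subfield_mult_notin[OF F _ _ bk]] by simp
qed

theorem corollary3:
  fixes F :: "'a::field_char_0 set" and p q :: "'a poly"
  assumes "is_subfield F" and "F \<noteq> UNIV"
    and "degree p > 0"
    and "q \<notin> poly_over F"
    and "lead_coeff p \<in> F" and "lead_coeff q \<in> F" and "coeff q 0 \<in> F"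
  shows "pcompose p q \<notin> poly_over F \<and> deficit F (pcompose p q) = deficit F q"
proof -
  define m where "m = degree q"
  have F0: "0 \<in> F" using subfieldD(1)[OF assms(1)] .
  obtain k where "k \<le> m" and bk: "coeff q k \<notin> F" and above: "\<forall>i>k. coeff q i \<in> F"
    using highest_coeff_notin[OF F0 assms(4)] unfolding m_def by blast
  have "k \<noteq> 0" "k \<noteq> m" using bk assms(6,7) unfolding m_def by metis+
  with \<open>k \<le> m\<close> have "0 < k" "k < m" by auto
  then obtain A B where q: "q = A + B" and AF: "A \<in> poly_over F" and dA: "degree A = m"
    and dB: "degree B = k" and bkB: "coeff B k \<notin> F"
    using split_at_highest_coeff_notin[OF assms(1) bk above] unfolding m_def by blast
  obtain j where dp: "degree p = Suc j" using assms(3) gr0_implies_Suc by blast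
  have "coeff (pcompose p q) (j * m + k) \<notin> F" "\<forall>i > j * m + k. coeff (pcompose p q) i \<in> F"
    unfolding q using pcompose_highest_coeff_notin[OF assms(1) AF dA dB \<open>0 < k\<close> \<open>k < m\<close> bkB dp
      assms(5)] by auto
  then have "pcompose p q \<notin> poly_over F"
    and "deficit F (pcompose p q) = Suc j * m - (j * m + k)"
    using deficit_eqI[OF F0] by (auto simp: degree_pcompose dp m_def)
  moreover have "deficit F q = m - k" using deficit_eqI[OF F0 bk above] by (simp add: m_def)
  ultimately show ?thesis using \<open>k < m\<close> by simp
qed

end
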